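(* Let $G$ be a connected graph with a cut vertex, let $\mathcal B$ and $C$ be the sets of blocks and cut vertices of $G$, respectively, and let $T$ be the block tree of $G$. Then $G$ is $1$-perfectly orientable if and only if one of the following conditions holds: (1) There exists a block $B_r$ of $G$ such that $B_r$ is $1$-perfectly orientable and for every arc $(B,v)\in\mathcal B\times C$ of the $B_r$-rooted orientation of $T$, the rooted graph $B^v$ is $1$-perfectly orientable. (2) There exists a cut vertex $v_r$ of $G$ such that for every arc $(B,v)\in\mathcal B\times C$ of the $v_r$-rooted orientation of $T$, the rooted graph $B^v$ is $1$-perfectly orientable.
   Context: All graphs are finite and simple. An orientation of $G$ is $1$-perfect if for every vertex the out-neighborhood is a clique in $G$; $G$ is $1$-perfectly orientable if it has a $1$-perfect orientation. A sink is a vertex of out-degree $0$. A rooted graph $B^v$ is a pair $(B,v)$ with $v\in V(B)$; it is $1$-perfectly orientable if $B$ has a $1$-perfect orientation in which $v$ is a sink. A graph is biconnected if it is connected and has no cut vertex; a block is a maximal biconnected subgraph. The block tree $T$ of a connected graph $G$ has vertex set $\mathcal B\cup C$, with a block $B$ adjacent to a cut vertex $v$ iff $v\in V(B)$. For a tree $T$ and a vertex $r$ of $T$, the $r$-rooted orientation of $T$ is the orientation in which every edge $\{x,y\}$ is oriented $x\to y$ iff $d_T(y,r)<d_T(x,r)$ (all edges point towards $r$). *)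

theory Defs
  imports Main
begin

definition graph :: "'a set \<Rightarrow> 'a set set \<Rightarrow> bool" where
  "graph V E \<longleftrightarrow> finite V \<and> (\<forall>e\<in>E. e \<subseteq> V \<and> card e = 2)"

definition adj_rel :: "'a set set \<Rightarrow> ('a \<times> 'a) set" where
  "adj_rel E = {(x, y). {x, y} \<in> E}"

definition connected_graph :: "'a set \<Rightarrow> 'a set set \<Rightarrow> bool" where
  "connected_graph V E \<longleftrightarrow> V \<noteq> {} \<and> (\<forall>x\<in>V. \<forall>y\<in>V. (x, y) \<in> (adj_rel E)\<^sup>*)"

definition components :: "'a set \<Rightarrow> 'a set set \<Rightarrow> 'a set set" where
  "components V E = V // {(x, y). x \<in> V \<and> y \<in> V \<and> (x, y) \<in> (adj_rel E)\<^sup>*}"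

definition del_vertex_E :: "'a set set \<Rightarrow> 'a \<Rightarrow> 'a set set" where
  "del_vertex_E E v = {e \<in> E. v \<notin> e}"

definition cut_vertex :: "'a set \<Rightarrow> 'a set set \<Rightarrow> 'a \<Rightarrow> bool" where
  "cut_vertex V E v \<longleftrightarrow> v \<in> V \<and>
     card (components (V - {v}) (del_vertex_E E v)) > card (components V E)"

definition biconnected :: "'a set \<Rightarrow> 'a set set \<Rightarrow> bool" where
  "biconnected V E \<longleftrightarrow> connected_graph V E \<and> \<not> (\<exists>v. cut_vertex V E v)"

definition subgraph :: "'a set \<Rightarrow> 'a set set \<Rightarrow> 'a set \<Rightarrow> 'a set set \<Rightarrow> bool" where
  "subgraph V' E' V E \<longleftrightarrow> V' \<subseteq> V \<and> E' \<subseteq> E \<and> graph V' E'"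

definition is_block :: "'a set \<Rightarrow> 'a set set \<Rightarrow> 'a set \<times> 'a set set \<Rightarrow> bool" where
  "is_block V E B \<longleftrightarrow> subgraph (fst B) (snd B) V E \<and> biconnected (fst B) (snd B) \<and>
     (\<forall>V'' E''. subgraph V'' E'' V E \<and> biconnected V'' E'' \<and> fst B \<subseteq> V'' \<and> snd B \<subseteq> E''
        \<longrightarrow> V'' = fst B \<and> E'' = snd B)"

definition orientation :: "'a set set \<Rightarrow> ('a \<times> 'a) set \<Rightarrow> bool" where
  "orientation E D \<longleftrightarrow> (\<forall>(x, y)\<in>D. {x, y} \<in> E) \<and>
     (\<forall>x y. {x, y} \<in> E \<longrightarrow> ((x, y) \<in> D \<longleftrightarrow> (y, x) \<notin> D))"

definition one_perfect :: "'a set \<Rightarrow> 'a set set \<Rightarrow> ('a \<times> 'a) set \<Rightarrow> bool" where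
  "one_perfect V E D \<longleftrightarrow> orientation E D \<and>
     (\<forall>v\<in>V. \<forall>x y. (v, x) \<in> D \<and> (v, y) \<in> D \<and> x \<noteq> y \<longrightarrow> {x, y} \<in> E)"

definition one_perfectly_orientable :: "'a set \<Rightarrow> 'a set set \<Rightarrow> bool" where
  "one_perfectly_orientable V E \<longleftrightarrow> (\<exists>D. one_perfect V E D)"

text \<open>Rooted graph B^v is 1-perfectly orientable: a 1-perfect orientation with v a sink.\<close>
definition rooted_one_perfectly_orientable :: "'a set \<Rightarrow> 'a set set \<Rightarrow> 'a \<Rightarrow> bool" where
  "rooted_one_perfectly_orientable V E v \<longleftrightarrow>
     v \<in> V \<and> (\<exists>D. one_perfect V E D \<and> (\<forall>x. (v, x) \<notin> D))"

definition block_tree :: "'a set \<Rightarrow> 'a set set \<Rightarrow>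
    (('a set \<times> 'a set set) + 'a) set \<times> ((('a set \<times> 'a set set) + 'a) \<times> (('a set \<times> 'a set set) + 'a)) set" where
  "block_tree V E =
    (Inl ` {B. is_block V E B} \<union> Inr ` {v. cut_vertex V E v},
     (let A = {(Inl B, Inr v) | B v. is_block V E B \<and> cut_vertex V E v \<and> v \<in> fst B}
      in A \<union> A\<inverse>))"

definition dist_rel :: "('b \<times> 'b) set \<Rightarrow> 'b \<Rightarrow> 'b \<Rightarrow> nat" where
  "dist_rel R x y = (LEAST n. (x, y) \<in> R ^^ n)"

definition rooted_arc :: "('b set \<times> ('b \<times> 'b) set) \<Rightarrow> 'b \<Rightarrow> 'b \<Rightarrow> 'b \<Rightarrow> bool" where
  "rooted_arc T r x y \<longleftrightarrow> (x, y) \<in> snd T \<and> dist_rel (snd T) y r < dist_rel (snd T) x r"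

end

(*
  Necessity: in a 1-perfect orientation, call the out-component of u the set of vertices reached
  from out-neighbours of u without passing through u. Along a shortest path between two vertices,
  once an arc points backwards all later arcs do, so of two distinct vertices at least one lies
  in the out-component of the other; hence a vertex v0 with smallest out-component lies in the
  out-component of every vertex with an out-neighbour. Root the block tree at the block of an arc
  leaving v0. If a parent cut vertex v of a block B had an out-neighbour in B, its out-component
  would connect B - v with the root side of G - v, which the block tree forbids. So restricting
  the orientation to the blocks yields condition (1).

  Sufficiency: orient every block so that its parent cut vertex is a sink. A cut vertex has only
  one block on its way to the root, so each vertex has out-neighbours in at most one block, and
  the union of the block orientations is 1-perfect because every edge lies in exactly one block.
*)

theory Submission
  imports Defs
begin

section \<open>Connectivity\<close>

abbreviation reach :: "'a set set \<Rightarrow> 'a \<Rightarrow> 'a \<Rightarrow> bool" where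
  "reach F x y \<equiv> (x, y) \<in> (adj_rel F)\<^sup>*"

text \<open>Connectivity of a vertex set through walks that may leave it.\<close>
definition connected_on :: "'a set \<Rightarrow> 'a set set \<Rightarrow> bool" where
  "connected_on W F \<longleftrightarrow> (\<forall>x\<in>W. \<forall>y\<in>W. reach F x y)"

lemma adj_relI: "{x, y} \<in> F \<Longrightarrow> (x, y) \<in> adj_rel F"
  by (simp add: adj_rel_def)

lemma adj_relD: "(x, y) \<in> adj_rel F \<Longrightarrow> {x, y} \<in> F"
  by (simp add: adj_rel_def)

lemma adj_rel_mono: "F \<subseteq> F' \<Longrightarrow> adj_rel F \<subseteq> adj_rel F'"
  by (auto simp: adj_rel_def)

lemma adj_rel_sym: "(x, y) \<in> adj_rel F \<Longrightarrow> (y, x) \<in> adj_rel F"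
  by (simp add: adj_rel_def insert_commute)

lemma reach_sym: "reach F x y \<Longrightarrow> reach F y x"
proof (induction rule: rtrancl_induct)
  case (step y z)
  then show ?case by (meson adj_rel_sym converse_rtrancl_into_rtrancl)
qed simp

lemma reach_mono: "reach F x y \<Longrightarrow> F \<subseteq> F' \<Longrightarrow> reach F' x y"
  by (meson adj_rel_mono rtrancl_mono subsetD)

lemma connected_onD: "connected_on W F \<Longrightarrow> x \<in> W \<Longrightarrow> y \<in> W \<Longrightarrow> reach F x y"
  unfolding connected_on_def by blast

lemma connected_on_mono: "connected_on W F \<Longrightarrow> F \<subseteq> F' \<Longrightarrow> connected_on W F'"
  unfolding connected_on_def by (meson reach_mono)

lemma connected_on_subsingleton: "W \<subseteq> {z} \<Longrightarrow> connected_on W F"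
  unfolding connected_on_def by auto

lemma connected_on_Un:
  assumes "connected_on A F" "connected_on B F" "x \<in> A" "x \<in> B"
  shows "connected_on (A \<union> B) F"
  unfolding connected_on_def
proof (intro ballI)
  fix y z assume "y \<in> A \<union> B" "z \<in> A \<union> B"
  then have "reach F y x" "reach F x z"
    using assms by (auto intro: connected_onD reach_sym)
  then show "reach F y z" by (rule rtrancl_trans)
qed

lemma connected_on_if_reach_hub:
  assumes "\<And>x. x \<in> W \<Longrightarrow> reach F x h"
  shows "connected_on W F"
  unfolding connected_on_def
proof (intro ballI)
  fix x y assume "x \<in> W" "y \<in> W"
  then have "reach F x h" "reach F h y" using assms[of x] reach_sym[OF assms[of y]] by simp_all
  then show "reach F x y" by (rule rtrancl_trans)
qed

lemma connected_on_walk: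
  assumes "\<And>l. i \<le> l \<Longrightarrow> l < j \<Longrightarrow> {f l, f (Suc l)} \<in> F"
  shows "connected_on (f ` {i..j}) F"
proof -
  have "reach F (f i) (f l)" if "i \<le> l" "l \<le> j" for l
    using that
  proof (induction l rule: dec_induct)
    case (step l)
    then have "reach F (f i) (f l)" "{f l, f (Suc l)} \<in> F" using assms by auto
    then show ?case using adj_relI rtrancl.rtrancl_into_rtrancl by metis
  qed simp
  then have "reach F y (f i)" "reach F (f i) z" if "y \<in> f ` {i..j}" "z \<in> f ` {i..j}" for y z
    using that by (auto intro: reach_sym)
  then show ?thesis
    unfolding connected_on_def by (meson rtrancl_trans)
qed

lemma del_vertex_E_subset: "del_vertex_E F w \<subseteq> F"
  by (auto simp: del_vertex_E_def)

lemma del_vertex_E_mono: "F \<subseteq> F' \<Longrightarrow> del_vertex_E F w \<subseteq> del_vertex_E F' w"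
  by (auto simp: del_vertex_E_def)

lemma del_vertex_EI: "e \<in> F \<Longrightarrow> w \<notin> e \<Longrightarrow> e \<in> del_vertex_E F w"
  by (auto simp: del_vertex_E_def)

lemma connected_on_walk_avoiding:
  assumes "\<And>l. i \<le> l \<Longrightarrow> l < j \<Longrightarrow> {f l, f (Suc l)} \<in> F" "w \<notin> f ` {i..j}"
  shows "connected_on (f ` {i..j}) (del_vertex_E F w)"
  using assms by (intro connected_on_walk del_vertex_EI) auto

lemma reach_del_vertex_E_avoids: "reach (del_vertex_E F w) x y \<Longrightarrow> x \<noteq> w \<Longrightarrow> y \<noteq> w"
proof (induction rule: rtrancl_induct)
  case (step y z)
  then show ?case by (auto simp: adj_rel_def del_vertex_E_def)
qed simp

lemma reach_del_vertex_E_swap: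
  assumes "reach (del_vertex_E F u) x y" "\<And>z. reach (del_vertex_E F u) x z \<Longrightarrow> z \<noteq> w"
  shows "reach (del_vertex_E F w) x y"
  using assms(1)
proof (induction rule: rtrancl_induct)
  case (step y z)
  then have "{y, z} \<in> del_vertex_E F w"
    using assms(2) adj_relD del_vertex_E_subset
    by (metis del_vertex_EI insertE rtrancl.rtrancl_into_rtrancl singletonD subsetD)
  then show ?case using step.IH by (meson adj_relI rtrancl.rtrancl_into_rtrancl)
qed simp

lemma card_components_connected:
  assumes "W \<noteq> {}" "connected_on W F"
  shows "card (components W F) = 1"
proof -
  let ?r = "{(x, y). x \<in> W \<and> y \<in> W \<and> reach F x y}"
  have "?r `` {x} = W" if "x \<in> W" for x
    using assms(2) that unfolding connected_on_def by auto
  then have "W // ?r = {W}" using assms(1) unfolding quotient_def by auto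
  then show ?thesis unfolding components_def by simp
qed

lemma card_components_disconnected:
  assumes "finite W" "\<not> connected_on W F"
  shows "card (components W F) \<ge> 2"
proof -
  obtain x y where xy: "x \<in> W" "y \<in> W" "\<not> reach F x y"
    using assms(2) unfolding connected_on_def by blast
  let ?r = "{(x, y). x \<in> W \<and> y \<in> W \<and> reach F x y}"
  have fin: "finite (W // ?r)" by (rule finite_quotient) (use assms in auto)
  have cx: "?r `` {x} \<in> W // ?r" using xy(1) by (rule quotientI)
  have cy: "?r `` {y} \<in> W // ?r" using xy(2) by (rule quotientI)
  have "y \<in> ?r `` {y}" "y \<notin> ?r `` {x}" using xy by auto
  then have "?r `` {x} \<noteq> ?r `` {y}" by blast
  then have "card {?r `` {x}, ?r `` {y}} = 2" by simp
  moreover have "card {?r `` {x}, ?r `` {y}} \<le> card (W // ?r)"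
    using cx cy fin by (intro card_mono) auto
  ultimately have "card (W // ?r) \<ge> 2" by linarith
  then show ?thesis by (simp only: components_def)
qed

lemma cut_vertex_iff:
  assumes "finite V" "connected_graph V E"
  shows "cut_vertex V E v \<longleftrightarrow> v \<in> V \<and> \<not> connected_on (V - {v}) (del_vertex_E E v)"
proof -
  have "card (components V E) = 1"
    using assms(2) by (intro card_components_connected) (auto simp: connected_graph_def connected_on_def)
  moreover have "card (components (V - {v}) (del_vertex_E E v)) > 1 \<longleftrightarrow>
      \<not> connected_on (V - {v}) (del_vertex_E E v)"
  proof (cases "V - {v} = {}")
    case True
    then have "components (V - {v}) (del_vertex_E E v) = {}"
      by (simp only: components_def quotient_def True) simp
    moreover have "connected_on (V - {v}) (del_vertex_E E v)"
      unfolding True by (simp add: connected_on_def)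
    ultimately show ?thesis by simp
  next
    case nonempty: False
    show ?thesis
    proof (cases "connected_on (V - {v}) (del_vertex_E E v)")
      case True
      then show ?thesis using card_components_connected[OF nonempty] by simp
    next
      case False
      moreover have "finite (V - {v})" using assms(1) by simp
      ultimately have "card (components (V - {v}) (del_vertex_E E v)) \<ge> 2"
        by (rule card_components_disconnected[rotated])
      then show ?thesis using False by simp
    qed
  qed
  ultimately show ?thesis unfolding cut_vertex_def by simp
qed

lemma biconnected_iff:
  assumes "finite V"
  shows "biconnected V E \<longleftrightarrow>
    V \<noteq> {} \<and> connected_on V E \<and> (\<forall>w\<in>V. connected_on (V - {w}) (del_vertex_E E w))"
proof -
  have "connected_graph V E \<longleftrightarrow> V \<noteq> {} \<and> connected_on V E"
    by (auto simp: connected_graph_def connected_on_def)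
  then show ?thesis
    unfolding biconnected_def using cut_vertex_iff[OF assms] by blast
qed

lemma biconnected_connected_on_minus:
  assumes "graph V E" "biconnected V E"
  shows "connected_on (V - {w}) (del_vertex_E E w)"
proof -
  have "finite V" using assms(1) by (simp add: graph_def)
  note bic = assms(2)[unfolded biconnected_iff[OF this]]
  show ?thesis
  proof (cases "w \<in> V")
    case False
    then have "del_vertex_E E w = E" using assms(1) by (auto simp: del_vertex_E_def graph_def)
    then show ?thesis using False bic by simp
  qed (use bic in blast)
qed

section \<open>Shortest walks\<close>

definition shortest_walk :: "('b \<times> 'b) set \<Rightarrow> (nat \<Rightarrow> 'b) \<Rightarrow> nat \<Rightarrow> bool" where
  "shortest_walk R f k \<longleftrightarrow>
     (\<forall>i<k. (f i, f (Suc i)) \<in> R) \<and> (\<forall>n. (f 0, f k) \<in> R ^^ n \<longrightarrow> k \<le> n)"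

lemma shortest_walk_exists:
  assumes "(a, b) \<in> R\<^sup>*"
  obtains f k where "f 0 = a" "f k = b" "shortest_walk R f k"
proof -
  have "\<exists>n. (a, b) \<in> R ^^ n" using assms rtrancl_power by blast
  define k where "k = (LEAST n. (a, b) \<in> R ^^ n)"
  have "(a, b) \<in> R ^^ k" unfolding k_def using \<open>\<exists>n. _\<close> by (rule LeastI_ex)
  then obtain f where "f 0 = a" "f k = b" "\<forall>i<k. (f i, f (Suc i)) \<in> R"
    using relpow_fun_conv by metis
  moreover have "k \<le> n" if "(a, b) \<in> R ^^ n" for n
    unfolding k_def using that by (rule Least_le)
  ultimately show ?thesis using that unfolding shortest_walk_def by auto
qed

lemma walk_relpow:
  assumes "\<forall>i<k. (f i, f (Suc i)) \<in> R" "i \<le> j" "j \<le> k"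
  shows "(f i, f j) \<in> R ^^ (j - i)"
  using assms(2,3)
proof (induction j rule: dec_induct)
  case (step n)
  then have "(f i, f n) \<in> R ^^ (n - i)" "(f n, f (Suc n)) \<in> R" using assms(1) by auto
  then show ?case using step by (auto simp: Suc_diff_le intro: relcompI)
qed simp

lemma shortest_walk_no_shortcut:
  assumes "shortest_walk R f k" "i \<le> j" "j \<le> k" "(f i, f j) \<in> R ^^ n"
  shows "j - i \<le> n"
proof -
  have walk: "\<forall>i<k. (f i, f (Suc i)) \<in> R" using assms(1) unfolding shortest_walk_def by blast
  have "(f 0, f i) \<in> R ^^ i" "(f j, f k) \<in> R ^^ (k - j)"
    using walk_relpow[OF walk, of 0 i] walk_relpow[OF walk, of j k] assms(2,3) by simp_all
  then have "(f 0, f k) \<in> R ^^ i O R ^^ n O R ^^ (k - j)"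
    using assms(4) by blast
  then have "(f 0, f k) \<in> R ^^ (i + n + (k - j))"
    by (simp only: relpow_add O_assoc)
  then have "k \<le> i + n + (k - j)" using assms(1) unfolding shortest_walk_def by blast
  then show ?thesis using assms(2,3) by linarith
qed

lemma shortest_walk_inj:
  assumes "shortest_walk R f k"
  shows "inj_on f {..k}"
proof -
  have "i = j" if "i \<le> j" "j \<le> k" "f i = f j" for i j
    using shortest_walk_no_shortcut[OF assms that(1,2), of 0] that(1,3) by simp
  then show ?thesis unfolding inj_on_def by (metis atMost_iff nat_le_linear)
qed

lemma shortest_walk_no_chord:
  assumes "shortest_walk R f k" "Suc i < j" "j \<le> k"
  shows "(f i, f j) \<notin> R"
  using shortest_walk_no_shortcut[OF assms(1), of i j 1] assms(2,3) by auto

lemma reach_walk_minus: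
  assumes inj: "inj_on f {..k}" and edges: "\<And>l. l < k \<Longrightarrow> {f l, f (Suc l)} \<in> F"
    and x: "x \<in> f ` {..k}" "x \<noteq> w"
  shows "reach (del_vertex_E F w) x (f 0) \<or> reach (del_vertex_E F w) x (f k)"
proof -
  obtain j where j: "j \<le> k" "x = f j" using x by blast
  have segment: "connected_on (f ` {i..i'}) (del_vertex_E F w)"
    if "i' \<le> k" "w \<notin> f ` {i..i'}" for i i'
    using that edges by (intro connected_on_walk_avoiding) auto
  show ?thesis
  proof (cases "w \<in> f ` {0..j}")
    case False
    then show ?thesis using segment[of j 0] j by (auto intro: connected_onD)
  next
    case True
    then obtain l where l: "l \<le> j" "w = f l" by auto
    have "f i \<noteq> w" if "j \<le> i" "i \<le> k" for i
    proof
      assume "f i = w"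
      then have "i = l" using inj l j that by (auto simp: inj_on_def)
      then show False using l j x that by simp
    qed
    then have "w \<notin> f ` {j..k}" by fastforce
    then show ?thesis using segment[of k j] j by (auto intro: connected_onD)
  qed
qed

section \<open>Biconnectivity\<close>

text \<open>Deleting \<open>v\<close> leaves the path as a bridge between the two sets; deleting another vertex
  leaves \<open>v\<close> as a hub.\<close>
lemma connected_on_Un_walk_minus:
  assumes c1: "\<And>w. connected_on (V1 - {w}) (del_vertex_E F w)"
    and c2: "\<And>w. connected_on (V2 - {w}) (del_vertex_E F w)"
    and edges: "\<And>l. l < k \<Longrightarrow> {f l, f (Suc l)} \<in> F"
    and v: "v \<in> V1" "v \<in> V2" "v \<notin> f ` {..k}"
    and ends: "f 0 \<in> V1" "f k \<in> V2" and inj: "inj_on f {..k}"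
  shows "connected_on (V1 \<union> V2 \<union> f ` {..k} - {w}) (del_vertex_E F w)"
    (is "connected_on (?V - {w}) ?F")
proof (cases "w = v")
  case True
  have walk: "connected_on (f ` {0..k}) (del_vertex_E F v)"
    using v(3) edges by (intro connected_on_walk_avoiding) auto
  have f0k: "f 0 \<noteq> v" "f k \<noteq> v" using v(3) by auto
  have return: "reach (del_vertex_E F v) (f k) (f 0)"
    using connected_onD[OF walk] by simp
  have "reach (del_vertex_E F v) x (f 0)" if x: "x \<in> ?V - {v}" for x
  proof -
    consider "x \<in> V1" | "x \<in> V2" | "x \<in> f ` {0..k}" using x by (auto simp: atLeast0AtMost)
    then show ?thesis
    proof cases
      case 1
      then show ?thesis using connected_onD[OF c1, of x v "f 0"] x ends f0k by simp
    next
      case 2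
      then have "reach (del_vertex_E F v) x (f k)"
        using connected_onD[OF c2, of x v "f k"] x ends f0k by simp
      then show ?thesis using return by (rule rtrancl_trans)
    next
      case 3
      then show ?thesis using connected_onD[OF walk] by simp
    qed
  qed
  then show ?thesis using True by (blast intro: connected_on_if_reach_hub)
next
  case False
  have to_v: "reach ?F y v" if "y \<in> V1 \<union> V2" "y \<noteq> w" for y
    using that connected_onD[OF c1, of y w v] connected_onD[OF c2, of y w v] v False by auto
  have "reach ?F x v" if x: "x \<in> ?V - {w}" for x
  proof (cases "x \<in> V1 \<union> V2")
    case False
    then have "x \<in> f ` {..k}" using x by blast
    then obtain y where xy: "reach ?F x y" and "y \<in> {f 0, f k}"
      using reach_walk_minus[OF inj edges, of x w] x by blast
    moreover have "y \<noteq> w" using reach_del_vertex_E_avoids[OF xy] x by blast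
    ultimately have "reach ?F y v" using to_v[of y] ends by auto
    with xy show ?thesis by (rule rtrancl_trans)
  qed (use to_v[of x] x in simp)
  then show ?thesis by (rule connected_on_if_reach_hub)
qed

lemma biconnected_Un_walk:
  assumes g1: "graph V1 E1" "biconnected V1 E1" and g2: "graph V2 E2" "biconnected V2 E2"
    and v: "v \<in> V1" "v \<in> V2" "v \<notin> f ` {..k}"
    and ends: "f 0 \<in> V1" "f k \<in> V2" and inj: "inj_on f {..k}"
  shows "biconnected (V1 \<union> V2 \<union> f ` {..k}) (E1 \<union> E2 \<union> {{f i, f (Suc i)} | i. i < k})"
    (is "biconnected ?V ?E")
proof -
  have edges: "{f l, f (Suc l)} \<in> ?E" if "l < k" for l using that by blast
  have del1: "del_vertex_E E1 w \<subseteq> del_vertex_E ?E w" and del2: "del_vertex_E E2 w \<subseteq> del_vertex_E ?E w"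
    for w by (rule del_vertex_E_mono; blast)+
  have "connected_on (?V - {w}) (del_vertex_E ?E w)" for w
    using connected_on_mono[OF biconnected_connected_on_minus[OF g1] del1]
      connected_on_mono[OF biconnected_connected_on_minus[OF g2] del2]
    by (rule connected_on_Un_walk_minus[OF _ _ edges v ends inj])
  moreover have "connected_on ?V ?E"
  proof -
    have "finite V1" "finite V2" using g1(1) g2(1) by (simp_all add: graph_def)
    then have "connected_on V1 E1" "connected_on V2 E2"
      using g1(2) g2(2) biconnected_iff by blast+
    then have conn1: "connected_on V1 ?E" and conn2: "connected_on V2 ?E"
      by (auto intro: connected_on_mono)
    have "connected_on (f ` {0..k}) ?E" by (intro connected_on_walk edges) simp
    then have "connected_on (V1 \<union> V2 \<union> f ` {0..k}) ?E"
      using connected_on_Un[OF connected_on_Un[OF conn1 conn2 v(1,2)], of "f ` {0..k}" "f 0"] ends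
      by simp
    then show ?thesis by (simp add: atLeast0AtMost)
  qed
  moreover have "finite ?V" using g1(1) g2(1) by (simp add: graph_def)
  ultimately show ?thesis using v(1) by (subst biconnected_iff) auto
qed

lemma graph_edge_vertices: "graph V E \<Longrightarrow> {x, y} \<in> E \<Longrightarrow> x \<in> V \<and> y \<in> V \<and> x \<noteq> y"
  by (auto simp: graph_def)

lemma biconnected_edge:
  assumes "x \<noteq> y"
  shows "biconnected {x, y} {{x, y}}"
proof -
  have "reach {{x, y}} x y" "reach {{x, y}} y x"
    by (simp_all add: adj_relI insert_commute r_into_rtrancl)
  then have "connected_on {x, y} {{x, y}}" unfolding connected_on_def by auto
  moreover have "connected_on ({x, y} - {w}) (del_vertex_E {{x, y}} w)" if "w \<in> {x, y}" for w
  proof -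
    have "{x, y} - {w} \<subseteq> {x} \<or> {x, y} - {w} \<subseteq> {y}" using that by auto
    then show ?thesis using connected_on_subsingleton by metis
  qed
  ultimately show ?thesis by (subst biconnected_iff) auto
qed

lemma one_perfect_arc_edge: "one_perfect V E D \<Longrightarrow> (x, y) \<in> D \<Longrightarrow> {x, y} \<in> E"
  by (auto simp: one_perfect_def orientation_def)

lemma one_perfect_orient: "one_perfect V E D \<Longrightarrow> {x, y} \<in> E \<Longrightarrow> (x, y) \<in> D \<longleftrightarrow> (y, x) \<notin> D"
  by (auto simp: one_perfect_def orientation_def)

lemma one_perfect_out_clique:
  "one_perfect V E D \<Longrightarrow> v \<in> V \<Longrightarrow> (v, x) \<in> D \<Longrightarrow> (v, y) \<in> D \<Longrightarrow> x \<noteq> y \<Longrightarrow> {x, y} \<in> E"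
  by (auto simp: one_perfect_def)

definition restrict_arcs :: "('a \<times> 'a) set \<Rightarrow> 'a set set \<Rightarrow> ('a \<times> 'a) set" where
  "restrict_arcs D F = {(x, y) \<in> D. {x, y} \<in> F}"

section \<open>Blocks and the block tree\<close>

text \<open>The common form of conditions (1) and (2), for a root \<open>r\<close> of the block tree.\<close>
definition rooted_blocks_orientable ::
    "'a set \<Rightarrow> 'a set set \<Rightarrow> ('a set \<times> 'a set set) + 'a \<Rightarrow> bool" where
  "rooted_blocks_orientable V E r \<longleftrightarrow>
     (\<forall>B v. is_block V E B \<and> cut_vertex V E v \<and> rooted_arc (block_tree V E) r (Inl B) (Inr v)
        \<longrightarrow> rooted_one_perfectly_orientable (fst B) (snd B) v)"

text \<open>The cut vertex only serves to ensure that every vertex lies on an edge.\<close>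
locale separable_graph =
  fixes V :: "'a set" and E :: "'a set set"
  assumes graph: "graph V E" and connected: "connected_graph V E"
    and has_cut_vertex: "\<exists>v. cut_vertex V E v"
begin

lemma finite_V: "finite V"
  using graph by (simp add: graph_def)

lemma finite_E: "finite E"
proof -
  have "E \<subseteq> Pow V" using graph by (auto simp: graph_def)
  then show ?thesis using finite_V by (meson finite_Pow_iff finite_subset)
qed

lemma connected_on_V: "connected_on V E"
  using connected by (simp add: connected_graph_def connected_on_def)

lemma cut_vertex_iff_disconnects:
  "cut_vertex V E v \<longleftrightarrow> v \<in> V \<and> \<not> connected_on (V - {v}) (del_vertex_E E v)"
  by (rule cut_vertex_iff[OF finite_V connected])

lemma edge_vertices: "{x, y} \<in> E \<Longrightarrow> x \<in> V \<and> y \<in> V \<and> x \<noteq> y"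
  by (rule graph_edge_vertices[OF graph])

lemma reach_in_V: "reach F x y \<Longrightarrow> F \<subseteq> E \<Longrightarrow> x \<in> V \<Longrightarrow> y \<in> V"
proof (induction rule: rtrancl_induct)
  case (step y z)
  then show ?case using edge_vertices by (auto simp: adj_rel_def)
qed simp

lemma exists_edge:
  assumes u: "u \<in> V"
  obtains z where "{u, z} \<in> E"
proof -
  obtain c where "cut_vertex V E c" using has_cut_vertex by blast
  then obtain a b where "a \<in> V" "b \<in> V" "a \<noteq> b"
    unfolding cut_vertex_iff_disconnects connected_on_def by blast
  then obtain z where z: "z \<in> V" "z \<noteq> u" by metis
  have "reach E u z" using connected_onD[OF connected_on_V u z(1)] .
  then show ?thesis
  proof (cases rule: converse_rtranclE)
    case (step y)
    then show ?thesis using that by (simp add: adj_rel_def)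
  qed (use z in simp)
qed

lemma blockD:
  assumes "is_block V E B"
  shows "graph (fst B) (snd B)" "fst B \<subseteq> V" "snd B \<subseteq> E" "biconnected (fst B) (snd B)"
  using assms by (auto simp: is_block_def subgraph_def)

lemma block_maximal:
  assumes "is_block V E B" "subgraph V' E' V E" "biconnected V' E'" "fst B \<subseteq> V'" "snd B \<subseteq> E'"
  shows "V' = fst B \<and> E' = snd B"
  using assms unfolding is_block_def by blast

lemma block_edge_vertices:
  assumes "is_block V E B" "{x, y} \<in> snd B"
  shows "x \<in> fst B \<and> y \<in> fst B"
  using blockD(1)[OF assms(1)] assms(2) by (auto simp: graph_def)

lemma edge_in_block:
  assumes e: "{x, y} \<in> E"
  obtains B where "is_block V E B" "{x, y} \<in> snd B"
proof -
  define P where "P = (\<lambda>H. subgraph (fst H) (snd H) V E \<and> biconnected (fst H) (snd H) \<and> {x, y} \<in> snd H)"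
  define size where "size = (\<lambda>H::'a set \<times> 'a set set. card (fst H) + card (snd H))"
  have "P ({x, y}, {{x, y}})"
    using edge_vertices[OF e] e biconnected_edge[of x y] by (simp add: P_def subgraph_def graph_def)
  moreover have "size H < card V + card E + 1" if "P H" for H
  proof -
    have "fst H \<subseteq> V" "snd H \<subseteq> E" using that by (auto simp: P_def subgraph_def)
    then have "card (fst H) \<le> card V" "card (snd H) \<le> card E"
      using card_mono finite_V finite_E by blast+
    then show ?thesis unfolding size_def by linarith
  qed
  ultimately obtain B where B: "P B" "\<And>H. P H \<Longrightarrow> size H \<le> size B"
    using ex_has_greatest_nat[of P _ size] by metis
  have "is_block V E B"
    unfolding is_block_def
  proof (intro conjI allI impI)
    show "subgraph (fst B) (snd B) V E" "biconnected (fst B) (snd B)" using B by (auto simp: P_def)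
  next
    fix V' E' assume h: "subgraph V' E' V E \<and> biconnected V' E' \<and> fst B \<subseteq> V' \<and> snd B \<subseteq> E'"
    then have "size (V', E') \<le> size B" using B by (auto simp: P_def)
    moreover have fin: "finite V'" "finite E'"
      using h finite_V finite_E by (auto simp: subgraph_def intro: finite_subset)
    moreover have "card (fst B) \<le> card V'" "card (snd B) \<le> card E'" using h fin by (auto intro: card_mono)
    ultimately have "card (fst B) = card V'" "card (snd B) = card E'" by (auto simp: size_def)
    then show "V' = fst B" "E' = snd B" using h fin card_subset_eq by metis+
  qed
  then show ?thesis using B(1) that by (simp add: P_def)
qed

lemma block_induced:
  assumes B: "is_block V E B" and xy: "x \<in> fst B" "y \<in> fst B" "{x, y} \<in> E"
  shows "{x, y} \<in> snd B"
proof -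
  let ?E' = "insert {x, y} (snd B)"
  have sub: "subgraph (fst B) ?E' V E"
    using blockD[OF B] xy graph by (auto simp: subgraph_def graph_def)
  have "biconnected (fst B) ?E'"
  proof -
    have fin: "finite (fst B)" using blockD(1)[OF B] by (simp add: graph_def)
    have mono: "snd B \<subseteq> ?E'" "del_vertex_E (snd B) w \<subseteq> del_vertex_E ?E' w" for w
      by (auto simp: del_vertex_E_def)
    show ?thesis
      using blockD(4)[OF B] connected_on_mono[OF _ mono(1)] connected_on_mono[OF _ mono(2)]
      unfolding biconnected_iff[OF fin] by blast
  qed
  then show ?thesis using block_maximal[OF B sub] by auto
qed

lemma block_nonempty: "is_block V E B \<Longrightarrow> fst B \<noteq> {}"
  using blockD(4) by (simp add: biconnected_def connected_graph_def)

lemma block_other_vertex: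
  assumes B: "is_block V E B" and u: "u \<in> fst B"
  obtains y where "y \<in> fst B" "y \<noteq> u"
proof (rule ccontr)
  assume "\<not> thesis"
  then have fB: "fst B = {u}" using u that by blast
  have "snd B = {}"
  proof (rule ccontr)
    assume "snd B \<noteq> {}"
    then obtain e where "e \<subseteq> {u}" "card e = 2" using blockD(1)[OF B] fB by (auto simp: graph_def)
    then show False using card_mono[of "{u}" e] by simp
  qed
  moreover obtain z where z: "{u, z} \<in> E" using exists_edge blockD(2)[OF B] u by blast
  moreover have "subgraph {u, z} {{u, z}} V E" "biconnected {u, z} {{u, z}}"
    using edge_vertices[OF z] z biconnected_edge by (auto simp: subgraph_def graph_def)
  ultimately have "{u, z} = fst B" using block_maximal[OF B] fB by auto
  then show False using edge_vertices[OF z] fB by auto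
qed

lemma block_connected_on_minus:
  assumes "is_block V E B"
  shows "connected_on (fst B - {v}) (del_vertex_E E v)"
  using biconnected_connected_on_minus[OF blockD(1,4)[OF assms]]
    del_vertex_E_mono[OF blockD(3)[OF assms]] by (rule connected_on_mono)

text \<open>A shortest such walk together with the two blocks forms a biconnected subgraph.\<close>
lemma block_eq_if_reach_avoiding:
  assumes B1: "is_block V E B1" and B2: "is_block V E B2"
    and v: "v \<in> fst B1" "v \<in> fst B2" and a: "a \<in> fst B1" "a \<noteq> v" and b: "b \<in> fst B2"
    and ab: "reach (del_vertex_E E v) a b"
  shows "B1 = B2"
proof -
  obtain f k where f: "f 0 = a" "f k = b" and sw: "shortest_walk (adj_rel (del_vertex_E E v)) f k"
    using shortest_walk_exists[OF ab] by blast
  have steps: "\<forall>i<k. (f i, f (Suc i)) \<in> adj_rel (del_vertex_E E v)"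
    using sw unfolding shortest_walk_def by blast
  have edges: "{f i, f (Suc i)} \<in> E" if "i < k" for i
    using del_vertex_E_subset adj_relD[OF steps[rule_format, OF that]] by (rule subsetD)
  have reach_f: "reach (del_vertex_E E v) a (f j)" if "j \<le> k" for j
  proof -
    have "(a, f j) \<in> adj_rel (del_vertex_E E v) ^^ j" using walk_relpow[OF steps, of 0 j] that f(1) by simp
    then show ?thesis by (rule relpow_imp_rtrancl)
  qed
  have "a \<in> V" using a(1) blockD(2)[OF B1] by blast
  then have avoid: "v \<notin> f ` {..k}" and in_V: "f ` {..k} \<subseteq> V"
    using reach_del_vertex_E_avoids[OF reach_f a(2)] reach_in_V[OF reach_f del_vertex_E_subset]
    by auto
  define V' where "V' = fst B1 \<union> fst B2 \<union> f ` {..k}"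
  define E' where "E' = snd B1 \<union> snd B2 \<union> {{f i, f (Suc i)} | i. i < k}"
  have bic: "biconnected V' E'"
    unfolding V'_def E'_def using blockD(1,4)[OF B1] blockD(1,4)[OF B2] v avoid f a(1) b
    by (intro biconnected_Un_walk shortest_walk_inj[OF sw]) auto
  have sub: "subgraph V' E' V E"
  proof -
    have "V' \<subseteq> V" "E' \<subseteq> E"
      using blockD(2,3)[OF B1] blockD(2,3)[OF B2] in_V edges by (auto simp: V'_def E'_def)
    moreover have "e \<subseteq> V'" if "e \<in> E'" for e
      using that blockD(1)[OF B1] blockD(1)[OF B2] by (auto simp: V'_def E'_def graph_def)
    ultimately show ?thesis
      using graph finite_V by (auto simp: subgraph_def graph_def intro: finite_subset)
  qed
  have "fst B1 \<subseteq> V'" "snd B1 \<subseteq> E'" "fst B2 \<subseteq> V'" "snd B2 \<subseteq> E'"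
    by (auto simp: V'_def E'_def)
  then have "V' = fst B1 \<and> E' = snd B1" "V' = fst B2 \<and> E' = snd B2"
    using block_maximal[OF B1 sub bic] block_maximal[OF B2 sub bic] by blast+
  then show ?thesis by (simp add: prod_eq_iff)
qed

lemma cut_vertex_if_two_blocks:
  assumes B1: "is_block V E B1" and B2: "is_block V E B2" and "B1 \<noteq> B2"
    and v: "v \<in> fst B1" "v \<in> fst B2"
  shows "cut_vertex V E v"
proof -
  obtain a where a: "a \<in> fst B1" "a \<noteq> v" using block_other_vertex[OF B1 v(1)] by blast
  obtain b where b: "b \<in> fst B2" "b \<noteq> v" using block_other_vertex[OF B2 v(2)] by blast
  have "\<not> reach (del_vertex_E E v) a b"
    using block_eq_if_reach_avoiding[OF B1 B2 v a b(1)] assms(3) by blast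
  moreover have "a \<in> V - {v}" "b \<in> V - {v}" using a b blockD(2)[OF B1] blockD(2)[OF B2] by auto
  ultimately have "\<not> connected_on (V - {v}) (del_vertex_E E v)" unfolding connected_on_def by blast
  then show ?thesis using v(1) blockD(2)[OF B1] cut_vertex_iff_disconnects by auto
qed

lemma block_eq_if_common_edge:
  assumes B1: "is_block V E B1" and B2: "is_block V E B2"
    and "{x, y} \<in> snd B1" "{x, y} \<in> snd B2"
  shows "B1 = B2"
proof -
  have "x \<in> fst B1" "y \<in> fst B1" "x \<in> fst B2" "y \<in> fst B2"
    using block_edge_vertices[OF B1] block_edge_vertices[OF B2] assms(3,4) by auto
  moreover have "x \<noteq> y" using edge_vertices subsetD[OF blockD(3)[OF B1] assms(3)] by blast
  ultimately show ?thesis using block_eq_if_reach_avoiding[OF B1 B2, of x y y] by simp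
qed

abbreviation tree_nodes where "tree_nodes \<equiv> fst (block_tree V E)"
abbreviation tree_edges where "tree_edges \<equiv> snd (block_tree V E)"
abbreviation tdist where "tdist t r \<equiv> dist_rel tree_edges t r"

definition node_vertices :: "('a set \<times> 'a set set) + 'a \<Rightarrow> 'a set" where
  "node_vertices t = (case t of Inl B \<Rightarrow> fst B | Inr w \<Rightarrow> {w})"

lemma tree_edges_iff:
  "(s, t) \<in> tree_edges \<longleftrightarrow> (\<exists>B w. is_block V E B \<and> cut_vertex V E w \<and> w \<in> fst B \<and>
     ((s, t) = (Inl B, Inr w) \<or> (s, t) = (Inr w, Inl B)))"
  unfolding block_tree_def Let_def by auto

lemma tree_edge_Inl_Inr:
  "(Inl B, Inr w) \<in> tree_edges \<longleftrightarrow> is_block V E B \<and> cut_vertex V E w \<and> w \<in> fst B"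
  unfolding tree_edges_iff by auto (metis prod.collapse)

lemma tree_edge_Inr_Inl:
  "(Inr w, Inl B) \<in> tree_edges \<longleftrightarrow> is_block V E B \<and> cut_vertex V E w \<and> w \<in> fst B"
  unfolding tree_edges_iff by auto (metis prod.collapse)

lemma tree_nodes_Inl [simp]: "Inl B \<in> tree_nodes \<longleftrightarrow> is_block V E B"
  unfolding block_tree_def by auto

lemma tree_nodes_Inr [simp]: "Inr w \<in> tree_nodes \<longleftrightarrow> cut_vertex V E w"
  unfolding block_tree_def by auto

lemma tree_edge_nodes: "(s, t) \<in> tree_edges \<Longrightarrow> s \<in> tree_nodes \<and> t \<in> tree_nodes"
  unfolding tree_edges_iff by auto

lemma tree_reach_blocks_sharing_vertex:
  assumes "is_block V E B" "is_block V E B'" "z \<in> fst B" "z \<in> fst B'"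
  shows "(Inl B, Inl B') \<in> tree_edges\<^sup>*"
proof (cases "B = B'")
  case False
  then have "cut_vertex V E z" using cut_vertex_if_two_blocks assms by blast
  then have "(Inl B, Inr z) \<in> tree_edges" "(Inr z, Inl B') \<in> tree_edges"
    using assms tree_edge_Inl_Inr tree_edge_Inr_Inl by auto
  then show ?thesis by (meson converse_rtrancl_into_rtrancl r_into_rtrancl)
qed simp

lemma tree_reach_blocks:
  assumes B: "is_block V E B" and B': "is_block V E B'"
  shows "(Inl B, Inl B') \<in> tree_edges\<^sup>*"
proof -
  obtain u u' where u: "u \<in> fst B" and u': "u' \<in> fst B'"
    using block_nonempty[OF B] block_nonempty[OF B'] by blast
  have "reach E u u'"
    using connected_onD[OF connected_on_V] u u' blockD(2)[OF B] blockD(2)[OF B'] by blast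
  then have "\<forall>B''. is_block V E B'' \<and> u' \<in> fst B'' \<longrightarrow> (Inl B, Inl B'') \<in> tree_edges\<^sup>*"
  proof (induction rule: rtrancl_induct)
    case base
    then show ?case using tree_reach_blocks_sharing_vertex[OF B] u by blast
  next
    case (step y z)
    obtain B3 where B3: "is_block V E B3" "{y, z} \<in> snd B3"
      using edge_in_block adj_relD[OF step.hyps(2)] by blast
    have yz: "y \<in> fst B3" "z \<in> fst B3" using block_edge_vertices[OF B3] by auto
    have B3_reach: "(Inl B, Inl B3) \<in> tree_edges\<^sup>*" using step.IH B3 yz by blast
    show ?case
    proof (intro allI impI)
      fix B'' assume "is_block V E B'' \<and> z \<in> fst B''"
      then have "(Inl B3, Inl B'') \<in> tree_edges\<^sup>*"
        using tree_reach_blocks_sharing_vertex[OF B3(1)] yz(2) by blast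
      with B3_reach show "(Inl B, Inl B'') \<in> tree_edges\<^sup>*" by (rule rtrancl_trans)
    qed
  qed
  then show ?thesis using B' u' by blast
qed

lemma tree_node_reach_block:
  assumes "t \<in> tree_nodes"
  obtains B where "is_block V E B" "(t, Inl B) \<in> tree_edges\<^sup>*" "(Inl B, t) \<in> tree_edges\<^sup>*"
proof (cases t)
  case (Inl B)
  then show ?thesis using assms that by simp
next
  case (Inr w)
  then have w: "cut_vertex V E w" using assms by simp
  then obtain z where "{w, z} \<in> E" using exists_edge cut_vertex_iff_disconnects by blast
  then obtain B where B: "is_block V E B" "{w, z} \<in> snd B" by (rule edge_in_block)
  then have "(Inr w, Inl B) \<in> tree_edges" "(Inl B, Inr w) \<in> tree_edges"
    using w block_edge_vertices tree_edge_Inl_Inr tree_edge_Inr_Inl by auto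
  then show ?thesis using Inr B that by blast
qed

lemma tree_connected: "t \<in> tree_nodes \<Longrightarrow> t' \<in> tree_nodes \<Longrightarrow> (t, t') \<in> tree_edges\<^sup>*"
proof -
  assume "t \<in> tree_nodes" "t' \<in> tree_nodes"
  then obtain B B' where "is_block V E B" "(t, Inl B) \<in> tree_edges\<^sup>*"
    and "is_block V E B'" "(Inl B', t') \<in> tree_edges\<^sup>*"
    using tree_node_reach_block by metis
  then show ?thesis using tree_reach_blocks by (meson rtrancl_trans)
qed

lemma tdist_relpow: "t \<in> tree_nodes \<Longrightarrow> r \<in> tree_nodes \<Longrightarrow> (t, r) \<in> tree_edges ^^ tdist t r"
proof -
  assume "t \<in> tree_nodes" "r \<in> tree_nodes"
  then have "\<exists>n. (t, r) \<in> tree_edges ^^ n" using tree_connected rtrancl_power by blast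
  then show ?thesis unfolding dist_rel_def by (rule LeastI_ex)
qed

lemma tdist_le: "(t, r) \<in> tree_edges ^^ n \<Longrightarrow> tdist t r \<le> n"
  unfolding dist_rel_def by (rule Least_le)

lemma tdist_self: "tdist t t = 0"
  using tdist_le[of t t 0] by simp

lemma tdist_eq_0: "tdist t r = 0 \<Longrightarrow> t \<in> tree_nodes \<Longrightarrow> r \<in> tree_nodes \<Longrightarrow> t = r"
  using tdist_relpow by fastforce

lemma node_vertices_connected_on_minus:
  "t \<in> tree_nodes \<Longrightarrow> connected_on (node_vertices t - {v}) (del_vertex_E E v)"
  by (cases t) (auto simp: node_vertices_def block_connected_on_minus intro: connected_on_subsingleton)

lemma node_vertices_minus_nonempty:
  assumes "t \<in> tree_nodes" "t \<noteq> Inr v"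
  obtains a where "a \<in> node_vertices t - {v}"
proof (cases t)
  case (Inl B)
  then have B: "is_block V E B" using assms(1) by simp
  obtain u where u: "u \<in> fst B" using block_nonempty[OF B] by blast
  obtain y where "y \<in> fst B" "y \<noteq> u" using block_other_vertex[OF B u] .
  then show ?thesis using u Inl that by (cases "u = v") (auto simp: node_vertices_def)
qed (use assms that in \<open>auto simp: node_vertices_def\<close>)

lemma reach_along_tree_walk:
  assumes "(t, r) \<in> tree_edges ^^ m" "t \<in> tree_nodes" "t \<noteq> Inr v"
    "\<forall>k<m. (Inr v, r) \<notin> tree_edges ^^ k"
    "a \<in> node_vertices t - {v}" "b \<in> node_vertices r - {v}"
  shows "reach (del_vertex_E E v) a b"
  using assms
proof (induction m arbitrary: t a)
  case 0
  then show ?case using node_vertices_connected_on_minus connected_onD by fastforce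
next
  case (Suc m)
  obtain t' where tt': "(t, t') \<in> tree_edges" and t'r: "(t', r) \<in> tree_edges ^^ m"
    using Suc.prems(1) by (rule relpow_Suc_E2)
  have t': "t' \<in> tree_nodes" "t' \<noteq> Inr v" using tree_edge_nodes[OF tt'] t'r Suc.prems(4) by auto
  obtain c where c: "c \<in> node_vertices t - {v}" "c \<in> node_vertices t' - {v}"
  proof -
    obtain B w where "w \<in> fst B" "(t, t') = (Inl B, Inr w) \<or> (t, t') = (Inr w, Inl B)"
      using tt' unfolding tree_edges_iff by blast
    then have "w \<in> node_vertices t - {v} \<and> w \<in> node_vertices t' - {v}"
      using Suc.prems(3) t'(2) by (auto simp: node_vertices_def)
    then show ?thesis using that by blast
  qed
  have "reach (del_vertex_E E v) a c"
    using connected_onD[OF node_vertices_connected_on_minus[OF Suc.prems(2)]] Suc.prems(5) c(1) .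
  moreover have "reach (del_vertex_E E v) c b"
    using Suc.IH[OF t'r t' _ c(2) Suc.prems(6)] Suc.prems(4) by auto
  ultimately show ?case by (rule rtrancl_trans)
qed

text \<open>A shortest tree path from \<open>t\<close> to \<open>r\<close> avoids the node of \<open>v\<close>, and consecutive nodes on it
  share a vertex other than \<open>v\<close>.\<close>
lemma reach_avoiding_if_not_farther:
  assumes "t \<in> tree_nodes" "r \<in> tree_nodes" "t \<noteq> Inr v" "tdist t r \<le> tdist (Inr v) r"
    "a \<in> node_vertices t - {v}" "b \<in> node_vertices r - {v}"
  shows "reach (del_vertex_E E v) a b"
proof -
  have "(Inr v, r) \<notin> tree_edges ^^ k" if "k < tdist t r" for k
    using tdist_le[of "Inr v" r k] that assms(4) by linarith
  then show ?thesis using reach_along_tree_walk[OF tdist_relpow[OF assms(1,2)]] assms by blast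
qed

lemma reach_avoiding_from_block:
  assumes "is_block V E B" "r \<in> tree_nodes" "tdist (Inl B) r \<le> tdist (Inr v) r"
    "a \<in> fst B" "a \<noteq> v" "b \<in> node_vertices r - {v}"
  shows "reach (del_vertex_E E v) a b"
  using reach_avoiding_if_not_farther[of "Inl B" r v a b] assms by (simp add: node_vertices_def)

lemma parent_block_exists:
  assumes v: "cut_vertex V E v" and r: "r \<in> tree_nodes" and "r \<noteq> Inr v"
  obtains B where "is_block V E B" "v \<in> fst B" "tdist (Inl B) r < tdist (Inr v) r"
proof -
  have "(Inr v, r) \<in> tree_edges ^^ tdist (Inr v) r" using tdist_relpow v r by simp
  moreover have "tdist (Inr v) r \<noteq> 0" using tdist_eq_0[of "Inr v" r] v r assms(3) by auto
  ultimately obtain n t where n: "tdist (Inr v) r = Suc n"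
    and t: "(Inr v, t) \<in> tree_edges" "(t, r) \<in> tree_edges ^^ n"
    by (metis not0_implies_Suc relpow_Suc_E2)
  then obtain B where "t = Inl B" "is_block V E B" "v \<in> fst B" unfolding tree_edges_iff by auto
  then show ?thesis using that tdist_le[OF t(2)] n by simp
qed

lemma block_towards_root_unique:
  assumes x: "cut_vertex V E x" and B: "is_block V E B" and B': "is_block V E B'"
    and xB: "x \<in> fst B" "x \<in> fst B'" and r: "r \<in> tree_nodes"
    and d: "tdist (Inl B) r \<le> tdist (Inr x) r" "tdist (Inl B') r \<le> tdist (Inr x) r"
  shows "B = B'"
proof (cases "r = Inr x")
  case True
  then have "Inl B = r" using d(1) tdist_self tdist_eq_0[of "Inl B" r] B r by simp
  then show ?thesis using True by simp
next
  case False
  obtain b where b: "b \<in> node_vertices r - {x}" using node_vertices_minus_nonempty[OF r False] .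
  obtain a where a: "a \<in> fst B" "a \<noteq> x" using block_other_vertex[OF B xB(1)] by metis
  obtain a' where a': "a' \<in> fst B'" "a' \<noteq> x" using block_other_vertex[OF B' xB(2)] by metis
  have "reach (del_vertex_E E x) a b" "reach (del_vertex_E E x) a' b"
    using reach_avoiding_from_block[OF B r d(1) a b] reach_avoiding_from_block[OF B' r d(2) a' b] .
  then have "reach (del_vertex_E E x) a a'" using reach_sym rtrancl_trans by metis
  then show ?thesis using block_eq_if_reach_avoiding[OF B B' xB a a'(1)] by blast
qed

lemma parent_cut_vertex_unique:
  assumes B: "is_block V E B" and v: "cut_vertex V E v" "v \<in> fst B" and v': "cut_vertex V E v'" "v' \<in> fst B"
    and r: "r \<in> tree_nodes"
    and d: "tdist (Inr v) r < tdist (Inl B) r" "tdist (Inr v') r < tdist (Inl B) r"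
  shows "v = v'"
proof -
  have False if w: "cut_vertex V E w" "w \<in> fst B" "tdist (Inr w) r < tdist (Inl B) r"
    and w': "cut_vertex V E w'" "w' \<in> fst B" "w' \<noteq> w" and le: "tdist (Inr w') r \<le> tdist (Inr w) r"
  for w w'
  proof -
    have "r \<noteq> Inr w" using le tdist_self tdist_eq_0[of "Inr w'" r] w'(1,3) r by auto
    then obtain B1 where B1: "is_block V E B1" "w \<in> fst B1" "tdist (Inl B1) r < tdist (Inr w) r"
      using parent_block_exists[OF w(1) r] by blast
    obtain b where b: "b \<in> node_vertices r - {w}" using node_vertices_minus_nonempty[OF r \<open>r \<noteq> Inr w\<close>] .
    obtain a1 where a1: "a1 \<in> fst B1" "a1 \<noteq> w" using block_other_vertex[OF B1(1,2)] by metis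
    have "reach (del_vertex_E E w) a1 b"
      using reach_avoiding_from_block[OF B1(1) r _ a1 b] B1(3) by simp
    moreover have "reach (del_vertex_E E w) w' b"
      using reach_avoiding_if_not_farther[of "Inr w'" r w w' b] w' le r b by (simp add: node_vertices_def)
    ultimately have "reach (del_vertex_E E w) a1 w'" using reach_sym rtrancl_trans by metis
    then have "B1 = B" by (rule block_eq_if_reach_avoiding[OF B1(1) B B1(2) w(2) a1 w'(2)])
    then show False using B1(3) w(3) by simp
  qed
  then show ?thesis using v v' d by (metis nat_le_linear)
qed

lemma not_reach_from_child_block:
  assumes v: "cut_vertex V E v" and B: "is_block V E B" "v \<in> fst B" and r: "r \<in> tree_nodes"
    and d: "tdist (Inr v) r < tdist (Inl B) r"
    and x: "x \<in> fst B" "x \<noteq> v" and a: "a \<in> node_vertices r - {v}"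
  shows "\<not> reach (del_vertex_E E v) x a"
proof
  assume xa: "reach (del_vertex_E E v) x a"
  have "r \<noteq> Inr v" using a by (auto simp: node_vertices_def)
  then obtain B1 where B1: "is_block V E B1" "v \<in> fst B1" "tdist (Inl B1) r < tdist (Inr v) r"
    using parent_block_exists[OF v r] by blast
  obtain a1 where a1: "a1 \<in> fst B1" "a1 \<noteq> v" using block_other_vertex[OF B1(1,2)] by metis
  have "reach (del_vertex_E E v) a1 a"
    using reach_avoiding_from_block[OF B1(1) r _ a1 a] B1(3) by simp
  then have "reach (del_vertex_E E v) a1 x" using xa reach_sym rtrancl_trans by metis
  then have "B1 = B" by (rule block_eq_if_reach_avoiding[OF B1(1) B(1) B1(2) B(2) a1 x(1)])
  then show False using B1(3) d by simp
qed

lemma one_perfect_restrict_block: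
  assumes D: "one_perfect V E D" and B: "is_block V E B"
  shows "one_perfect (fst B) (snd B) (restrict_arcs D (snd B))"
  unfolding one_perfect_def orientation_def
proof (intro conjI ballI allI impI)
  fix x y assume "{x, y} \<in> snd B"
  then have "{x, y} \<in> E" "{y, x} \<in> snd B" using blockD(3)[OF B] by (auto simp: insert_commute)
  then show "(x, y) \<in> restrict_arcs D (snd B) \<longleftrightarrow> (y, x) \<notin> restrict_arcs D (snd B)"
    using one_perfect_orient[OF D] \<open>{x, y} \<in> snd B\<close> by (auto simp: restrict_arcs_def)
next
  fix v x y assume "v \<in> fst B" and h: "(v, x) \<in> restrict_arcs D (snd B) \<and> (v, y) \<in> restrict_arcs D (snd B) \<and> x \<noteq> y"
  then have "{x, y} \<in> E"
    using one_perfect_out_clique[OF D] blockD(2)[OF B] by (auto simp: restrict_arcs_def)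
  moreover have "x \<in> fst B" "y \<in> fst B" using h block_edge_vertices[OF B] by (auto simp: restrict_arcs_def)
  ultimately show "{x, y} \<in> snd B" using block_induced[OF B] by blast
qed (auto simp: restrict_arcs_def)

section \<open>Out-components of a 1-perfect orientation\<close>

context
  fixes D assumes D: "one_perfect V E D"
begin

definition out_component :: "'a \<Rightarrow> 'a set" where
  "out_component u = {y. \<exists>x. (u, x) \<in> D \<and> reach (del_vertex_E E u) x y}"

lemma arc_vertices: "(x, y) \<in> D \<Longrightarrow> x \<in> V \<and> y \<in> V \<and> x \<noteq> y"
  using edge_vertices one_perfect_arc_edge[OF D] by blast

lemma out_neighbour_mem_out_component: "(u, x) \<in> D \<Longrightarrow> x \<in> out_component u"
  unfolding out_component_def by blast

lemma out_component_closed: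
  assumes "y \<in> out_component u" "reach (del_vertex_E E u) y z"
  shows "z \<in> out_component u"
proof -
  obtain x where "(u, x) \<in> D" "reach (del_vertex_E E u) x y"
    using assms(1) unfolding out_component_def by blast
  then show ?thesis using rtrancl_trans[OF _ assms(2)] unfolding out_component_def by blast
qed

text \<open>Out-neighbours of \<open>u\<close> are pairwise adjacent, so the out-component is connected.\<close>
lemma out_component_connected:
  assumes "y \<in> out_component u" "y' \<in> out_component u"
  shows "reach (del_vertex_E E u) y y'"
proof -
  obtain x x' where x: "(u, x) \<in> D" "reach (del_vertex_E E u) x y"
    and x': "(u, x') \<in> D" "reach (del_vertex_E E u) x' y'"
    using assms unfolding out_component_def by blast
  have "reach (del_vertex_E E u) x x'"
  proof (cases "x = x'")
    case False
    then have "{x, x'} \<in> E" using one_perfect_out_clique[OF D] arc_vertices x x' by blast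
    moreover have "u \<notin> {x, x'}" using arc_vertices[OF x(1)] arc_vertices[OF x'(1)] by auto
    ultimately show ?thesis by (meson adj_relI del_vertex_EI r_into_rtrancl)
  qed simp
  with reach_sym[OF x(2)] have "reach (del_vertex_E E u) y x'" by (rule rtrancl_trans)
  then show ?thesis using x'(2) by (rule rtrancl_trans)
qed

lemma out_component_not_self: "u \<notin> out_component u"
proof
  assume "u \<in> out_component u"
  then obtain x where x: "(u, x) \<in> D" "reach (del_vertex_E E u) x u"
    unfolding out_component_def by blast
  have "x \<noteq> u" using arc_vertices[OF x(1)] by auto
  then show False using reach_del_vertex_E_avoids[OF x(2)] by simp
qed

lemma out_component_subset: "out_component u \<subseteq> V"
proof
  fix y assume "y \<in> out_component u"
  then obtain x where x: "(u, x) \<in> D" "reach (del_vertex_E E u) x y"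
    unfolding out_component_def by blast
  have "x \<in> V" using arc_vertices[OF x(1)] by simp
  then show "y \<in> V" using reach_in_V[OF x(2) del_vertex_E_subset] by simp
qed

text \<open>An inner vertex of a shortest walk cannot have both walk neighbours as out-neighbours, since
  they would be adjacent; so once an arc of the walk points backwards, all later ones do.\<close>
lemma shortest_walk_arcs_backward:
  assumes sw: "shortest_walk (adj_rel E) f k" and first: "(f 1, f 0) \<in> D" and l: "1 \<le> l" "l \<le> k"
  shows "(f l, f (l - 1)) \<in> D"
  using l
proof (induction l rule: dec_induct)
  case (step l)
  then have backward: "(f l, f (l - 1)) \<in> D" and "l < k" by simp_all
  then have "{f l, f (Suc l)} \<in> E" using sw by (simp add: shortest_walk_def adj_relD)
  show ?case
  proof (rule ccontr)
    assume "(f (Suc l), f (Suc l - 1)) \<notin> D"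
    then have "(f l, f (Suc l)) \<in> D" using one_perfect_orient[OF D \<open>{f l, f (Suc l)} \<in> E\<close>] by simp
    moreover have "f (l - 1) \<noteq> f (Suc l)"
      using inj_on_eq_iff[OF shortest_walk_inj[OF sw], of "l - 1" "Suc l"] step.hyps \<open>l < k\<close> by simp
    ultimately have "(f (l - 1), f (Suc l)) \<in> adj_rel E"
      using backward one_perfect_out_clique[OF D] arc_vertices adj_relI by metis
    then show False using shortest_walk_no_chord[OF sw, of "l - 1" "Suc l"] step.hyps \<open>l < k\<close> by simp
  qed
qed (use first in simp)

text \<open>If the first arc of a shortest path from \<open>x\<close> to \<open>y\<close> pointed forwards, \<open>y\<close> would lie in the
  out-component of \<open>x\<close>; so all its arcs point backwards.\<close>
lemma out_component_either:
  assumes x: "x \<in> V" and y: "y \<in> V" and "x \<noteq> y" and yS: "y \<notin> out_component x"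
  shows "x \<in> out_component y"
proof -
  obtain f k where f: "f 0 = x" "f k = y" and sw: "shortest_walk (adj_rel E) f k"
    using shortest_walk_exists[OF connected_onD[OF connected_on_V x y]] by blast
  have k: "1 \<le> k" using f \<open>x \<noteq> y\<close> by (cases k) auto
  have steps: "\<forall>l<k. (f l, f (Suc l)) \<in> adj_rel E" using sw unfolding shortest_walk_def by blast
  have edges: "{f l, f (Suc l)} \<in> E" if "l < k" for l
    using steps that by (simp add: adj_relD)
  have inj: "inj_on f {..k}" by (rule shortest_walk_inj[OF sw])
  have "(f 1, f 0) \<in> D"
  proof (rule ccontr)
    assume "(f 1, f 0) \<notin> D"
    then have "(x, f 1) \<in> D" using one_perfect_orient[OF D edges[of 0]] k f(1) by simp
    moreover have "x \<notin> f ` {1..k}"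
    proof
      assume "x \<in> f ` {1..k}"
      then obtain i where "1 \<le> i" "i \<le> k" "f i = f 0" using f(1) by auto
      then show False using inj_on_eq_iff[OF inj, of i 0] by simp
    qed
    then have "reach (del_vertex_E E x) (f 1) (f k)"
      using k edges by (intro connected_onD[OF connected_on_walk_avoiding]) auto
    ultimately show False using yS f(2) unfolding out_component_def by blast
  qed
  then have "(y, f (k - 1)) \<in> D" using shortest_walk_arcs_backward[OF sw _ k] f(2) by simp
  moreover have "y \<notin> f ` {0..k - 1}"
  proof
    assume "y \<in> f ` {0..k - 1}"
    then obtain i where "i \<le> k - 1" "y = f i" by auto
    then have "i < k" "f i = f k" using f(2) k by auto
    then show False using inj_on_eq_iff[OF inj, of i k] by simp
  qed
  then have "reach (del_vertex_E E y) (f (k - 1)) (f 0)"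
    using k edges by (intro connected_onD[OF connected_on_walk_avoiding]) auto
  ultimately show ?thesis using f(1) unfolding out_component_def by blast
qed

text \<open>Otherwise the out-component of \<open>v\<close> would be strictly contained in that of \<open>v0\<close>.\<close>
lemma min_out_component_mem:
  assumes v0: "v0 \<in> V" and min: "\<And>u x. (u, x) \<in> D \<Longrightarrow> card (out_component v0) \<le> card (out_component u)"
    and v: "(v, x) \<in> D" "v \<noteq> v0"
  shows "v0 \<in> out_component v"
proof (rule ccontr)
  assume n: "v0 \<notin> out_component v"
  have vV: "v \<in> V" using arc_vertices[OF v(1)] by blast
  have vS: "v \<in> out_component v0" using out_component_either[OF vV v0 v(2) n] .
  have "out_component v \<subseteq> out_component v0"
  proof
    fix y assume "y \<in> out_component v"
    then obtain x' where x': "(v, x') \<in> D" "reach (del_vertex_E E v) x' y"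
      unfolding out_component_def by blast
    have x'S: "x' \<in> out_component v" using out_neighbour_mem_out_component[OF x'(1)] .
    have "reach (del_vertex_E E v0) x' y"
      using reach_del_vertex_E_swap[OF x'(2)] out_component_closed[OF x'S] n by blast
    moreover have "{v, x'} \<in> del_vertex_E E v0"
      using one_perfect_arc_edge[OF D x'(1)] x'S n v(2) by (auto intro: del_vertex_EI)
    ultimately have "reach (del_vertex_E E v0) v y" by (meson adj_relI converse_rtrancl_into_rtrancl)
    then show "y \<in> out_component v0" using out_component_closed[OF vS] by blast
  qed
  then have "out_component v \<subset> out_component v0" using vS out_component_not_self by blast
  then have "card (out_component v) < card (out_component v0)"
    using out_component_subset finite_V by (meson psubset_card_mono rev_finite_subset)
  then show False using min[OF v(1)] by simp
qed

end

lemma rooted_arc_block_cut: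
  "rooted_arc (block_tree V E) r (Inl B) (Inr v) \<longleftrightarrow>
     is_block V E B \<and> cut_vertex V E v \<and> v \<in> fst B \<and> tdist (Inr v) r < tdist (Inl B) r"
  by (auto simp: rooted_arc_def tree_edge_Inl_Inr)

text \<open>Otherwise the out-component would join \<open>B - v\<close> to the root side while avoiding \<open>v\<close>.\<close>
lemma parent_sink_in_child_block:
  assumes D: "one_perfect V E D" and v: "cut_vertex V E v" and B: "is_block V E B" "v \<in> fst B"
    and B0: "is_block V E B0" and d: "tdist (Inr v) (Inl B0) < tdist (Inl B) (Inl B0)"
    and a0: "a0 \<in> fst B0" "a0 \<noteq> v" "a0 \<in> out_component D v"
  shows "(v, x) \<notin> restrict_arcs D (snd B)"
proof
  assume "(v, x) \<in> restrict_arcs D (snd B)"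
  then have vx: "(v, x) \<in> D" "{v, x} \<in> snd B" by (auto simp: restrict_arcs_def)
  have x: "x \<in> fst B" "x \<noteq> v" using block_edge_vertices[OF B(1) vx(2)] arc_vertices[OF D vx(1)] by auto
  have "reach (del_vertex_E E v) x a0"
    using out_component_connected[OF D out_neighbour_mem_out_component[OF D vx(1)] a0(3)] .
  moreover have "a0 \<in> node_vertices (Inl B0) - {v}" using a0 by (simp add: node_vertices_def)
  ultimately show False using not_reach_from_child_block[OF v B _ d x] B0 by simp
qed

lemma exists_arc_min_out_component:
  assumes D: "one_perfect V E D"
  obtains v0 x0 where "(v0, x0) \<in> D"
    "\<And>u x. (u, x) \<in> D \<Longrightarrow> card (out_component D v0) \<le> card (out_component D u)"
proof -
  obtain a where "a \<in> V" using connected by (auto simp: connected_graph_def)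
  then obtain b where "{a, b} \<in> E" by (rule exists_edge)
  then have "(a, b) \<in> D \<or> (b, a) \<in> D" using one_perfect_orient[OF D] by blast
  then have "\<exists>p. p \<in> D" by blast
  then show ?thesis
    using that ex_has_least_nat[of "\<lambda>p. p \<in> D" _ "\<lambda>p. card (out_component D (fst p))"] by fastforce
qed

text \<open>Root the block tree at the block of an arc \<open>(v0, x0)\<close> for which the out-component of \<open>v0\<close> is
  smallest; then every out-component meets the root block.\<close>
lemma exists_root_block:
  assumes "one_perfectly_orientable V E"
  obtains Br where "is_block V E Br" "one_perfectly_orientable (fst Br) (snd Br)"
    "rooted_blocks_orientable V E (Inl Br)"
proof -
  obtain D where D: "one_perfect V E D" using assms unfolding one_perfectly_orientable_def by blast
  obtain v0 x0 where arc: "(v0, x0) \<in> D"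
    and min: "\<And>u x. (u, x) \<in> D \<Longrightarrow> card (out_component D v0) \<le> card (out_component D u)"
    using exists_arc_min_out_component[OF D] by blast
  have v0: "v0 \<in> V" "x0 \<noteq> v0" using arc_vertices[OF D arc] by auto
  obtain B0 where B0: "is_block V E B0" "{v0, x0} \<in> snd B0"
    using edge_in_block[OF one_perfect_arc_edge[OF D arc]] .
  have v0B0: "v0 \<in> fst B0" "x0 \<in> fst B0" using block_edge_vertices[OF B0] by auto
  have "rooted_one_perfectly_orientable (fst B) (snd B) v"
    if "rooted_arc (block_tree V E) (Inl B0) (Inl B) (Inr v)" for B v
  proof -
    have B: "is_block V E B" "v \<in> fst B" and v: "cut_vertex V E v"
      and d: "tdist (Inr v) (Inl B0) < tdist (Inl B) (Inl B0)"
      using that rooted_arc_block_cut by auto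
    have "(v, x) \<notin> restrict_arcs D (snd B)" for x
    proof (cases "v = v0")
      case True
      then show ?thesis
        using parent_sink_in_child_block[OF D v B B0(1) d v0B0(2)] v0(2)
          out_neighbour_mem_out_component[OF D arc] by simp
    next
      case False
      show ?thesis
      proof
        assume "(v, x) \<in> restrict_arcs D (snd B)"
        then have "v0 \<in> out_component D v"
          by (intro min_out_component_mem[OF D v0(1)]) (use min False in \<open>auto simp: restrict_arcs_def\<close>)
        then show False using parent_sink_in_child_block[OF D v B B0(1) d v0B0(1)] False
          \<open>(v, x) \<in> restrict_arcs D (snd B)\<close> by simp
      qed
    qed
    then show ?thesis
      unfolding rooted_one_perfectly_orientable_def using B one_perfect_restrict_block[OF D B(1)] by blast
  qed
  then have "rooted_blocks_orientable V E (Inl B0)" unfolding rooted_blocks_orientable_def by blast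
  moreover have "one_perfectly_orientable (fst B0) (snd B0)"
    unfolding one_perfectly_orientable_def using one_perfect_restrict_block[OF D B0(1)] by blast
  ultimately show ?thesis using that B0(1) by blast
qed

lemma parent_cut_vertex_exists:
  assumes B: "is_block V E B" and r: "r \<in> tree_nodes" and "r \<noteq> Inl B"
  obtains v where "rooted_arc (block_tree V E) r (Inl B) (Inr v)"
proof -
  have "(Inl B, r) \<in> tree_edges ^^ tdist (Inl B) r" using tdist_relpow B r by simp
  moreover have "tdist (Inl B) r \<noteq> 0" using tdist_eq_0[of "Inl B" r] B r assms(3) by auto
  ultimately obtain n t where n: "tdist (Inl B) r = Suc n"
    and t: "(Inl B, t) \<in> tree_edges" "(t, r) \<in> tree_edges ^^ n"
    by (metis not0_implies_Suc relpow_Suc_E2)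
  then obtain w where "t = Inr w" unfolding tree_edges_iff by auto
  then show ?thesis using that t tdist_le[OF t(2)] n unfolding rooted_arc_def by fastforce
qed

lemma block_orientation_parent_sink:
  assumes r: "r \<in> tree_nodes" and H: "rooted_blocks_orientable V E r"
    and Hr: "\<And>Br. r = Inl Br \<Longrightarrow> one_perfectly_orientable (fst Br) (snd Br)"
    and B: "is_block V E B"
  shows "\<exists>D. one_perfect (fst B) (snd B) D \<and>
    (\<forall>v x. rooted_arc (block_tree V E) r (Inl B) (Inr v) \<longrightarrow> (v, x) \<notin> D)"
proof (cases "\<exists>v. rooted_arc (block_tree V E) r (Inl B) (Inr v)")
  case True
  then obtain v where v: "rooted_arc (block_tree V E) r (Inl B) (Inr v)" by blast
  then have "rooted_one_perfectly_orientable (fst B) (snd B) v"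
    using H B rooted_arc_block_cut unfolding rooted_blocks_orientable_def by blast
  then obtain D where D: "one_perfect (fst B) (snd B) D" "\<And>x. (v, x) \<notin> D"
    unfolding rooted_one_perfectly_orientable_def by blast
  have "v' = v" if "rooted_arc (block_tree V E) r (Inl B) (Inr v')" for v'
    using parent_cut_vertex_unique[OF B _ _ _ _ r] that v rooted_arc_block_cut by metis
  then show ?thesis using D by blast
next
  case False
  then have "r = Inl B" using parent_cut_vertex_exists[OF B r] by metis
  then show ?thesis using Hr False unfolding one_perfectly_orientable_def by blast
qed

text \<open>Every edge lies in exactly one block, so the union orients each edge exactly once.\<close>
lemma one_perfect_glue_blocks:
  assumes DB: "\<And>B. is_block V E B \<Longrightarrow> one_perfect (fst B) (snd B) (DB B)"
    and out: "\<And>B1 B2 u x y. is_block V E B1 \<Longrightarrow> is_block V E B2 \<Longrightarrow>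
      (u, x) \<in> DB B1 \<Longrightarrow> (u, y) \<in> DB B2 \<Longrightarrow> B1 = B2"
  shows "one_perfect V E (\<Union>B \<in> {B. is_block V E B}. DB B)" (is "one_perfect V E ?D")
  unfolding one_perfect_def orientation_def
proof (intro conjI ballI allI impI)
  fix p assume "p \<in> ?D"
  then obtain B where "is_block V E B" "p \<in> DB B" by blast
  then show "case p of (x, y) \<Rightarrow> {x, y} \<in> E"
    using one_perfect_arc_edge[OF DB] blockD(3) by (cases p) blast
next
  fix x y assume e: "{x, y} \<in> E"
  obtain B0 where B0: "is_block V E B0" "{x, y} \<in> snd B0" using edge_in_block[OF e] .
  have "(a, b) \<in> ?D \<longleftrightarrow> (a, b) \<in> DB B0" if "{a, b} = {x, y}" for a b
  proof
    assume "(a, b) \<in> ?D"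
    then obtain B where "is_block V E B" "(a, b) \<in> DB B" by blast
    moreover have "B = B0"
      using block_eq_if_common_edge[OF _ B0(1)] one_perfect_arc_edge[OF DB] B0(2) that calculation by metis
    ultimately show "(a, b) \<in> DB B0" by simp
  qed (use B0 in blast)
  then show "(x, y) \<in> ?D \<longleftrightarrow> (y, x) \<notin> ?D"
    using one_perfect_orient[OF DB[OF B0(1)] B0(2)] by (simp add: insert_commute)
next
  fix u x y assume "(u, x) \<in> ?D \<and> (u, y) \<in> ?D \<and> x \<noteq> y"
  then obtain B1 B2 where B: "is_block V E B1" "(u, x) \<in> DB B1" "is_block V E B2" "(u, y) \<in> DB B2"
    and "x \<noteq> y" by blast
  then have "B1 = B2" using out by blast
  moreover have "u \<in> fst B1" using one_perfect_arc_edge[OF DB B(2)] block_edge_vertices B(1) by blast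
  ultimately have "{x, y} \<in> snd B1" using one_perfect_out_clique[OF DB] B \<open>x \<noteq> y\<close> by blast
  then show "{x, y} \<in> E" using blockD(3)[OF B(1)] by blast
qed

text \<open>Choose for each block an orientation with its parent cut vertex as a sink. A vertex with
  out-neighbours in two blocks would be a cut vertex for which neither block is a child, yet only
  one block through it lies towards the root.\<close>
lemma one_perfectly_orientable_if_rooted:
  assumes r: "r \<in> tree_nodes" and H: "rooted_blocks_orientable V E r"
    and Hr: "\<And>Br. r = Inl Br \<Longrightarrow> one_perfectly_orientable (fst Br) (snd Br)"
  shows "one_perfectly_orientable V E"
proof -
  obtain DB where DB: "\<And>B. is_block V E B \<Longrightarrow> one_perfect (fst B) (snd B) (DB B) \<and>
      (\<forall>v x. rooted_arc (block_tree V E) r (Inl B) (Inr v) \<longrightarrow> (v, x) \<notin> DB B)"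
    using block_orientation_parent_sink[OF r H Hr] by metis
  have "B1 = B2" if B: "is_block V E B1" "is_block V E B2" "(u, x) \<in> DB B1" "(u, y) \<in> DB B2"
    for B1 B2 u x y
  proof (rule ccontr)
    assume ne: "B1 \<noteq> B2"
    have u: "u \<in> fst B1" "u \<in> fst B2"
      using DB B one_perfect_arc_edge block_edge_vertices by metis+
    have cut: "cut_vertex V E u" using cut_vertex_if_two_blocks[OF B(1,2) ne u] .
    have "tdist (Inl B1) r \<le> tdist (Inr u) r" "tdist (Inl B2) r \<le> tdist (Inr u) r"
      using DB B u cut rooted_arc_block_cut by (meson not_le)+
    then show False using block_towards_root_unique[OF cut B(1,2) u r] ne by blast
  qed
  then have "one_perfect V E (\<Union>B \<in> {B. is_block V E B}. DB B)"
    using DB by (intro one_perfect_glue_blocks) blast+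
  then show ?thesis unfolding one_perfectly_orientable_def by blast
qed

lemma one_perfectly_orientable_iff_rooted:
  "one_perfectly_orientable V E \<longleftrightarrow>
    (\<exists>Br. is_block V E Br \<and> one_perfectly_orientable (fst Br) (snd Br) \<and>
        rooted_blocks_orientable V E (Inl Br)) \<or>
    (\<exists>vr. cut_vertex V E vr \<and> rooted_blocks_orientable V E (Inr vr))"
    (is "_ \<longleftrightarrow> ?block_root \<or> ?cut_vertex_root")
proof
  assume "one_perfectly_orientable V E"
  then show "?block_root \<or> ?cut_vertex_root" by (metis exists_root_block)
next
  assume "?block_root \<or> ?cut_vertex_root"
  then show "one_perfectly_orientable V E"
  proof (elim disjE exE conjE)
    fix Br assume "is_block V E Br" "one_perfectly_orientable (fst Br) (snd Br)"
      "rooted_blocks_orientable V E (Inl Br)"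
    then show ?thesis using one_perfectly_orientable_if_rooted[of "Inl Br"] by simp
  next
    fix vr assume "cut_vertex V E vr" "rooted_blocks_orientable V E (Inr vr)"
    then show ?thesis using one_perfectly_orientable_if_rooted[of "Inr vr"] by simp
  qed
qed

end

theorem theorem3p2:
  fixes V :: "'a set" and E :: "'a set set"
  assumes "graph V E" and "connected_graph V E" and "\<exists>v. cut_vertex V E v"
  shows "one_perfectly_orientable V E \<longleftrightarrow>
    ((\<exists>Br. is_block V E Br \<and> one_perfectly_orientable (fst Br) (snd Br) \<and>
        (\<forall>B v. is_block V E B \<and> cut_vertex V E v \<and>
           rooted_arc (block_tree V E) (Inl Br) (Inl B) (Inr v)
           \<longrightarrow> rooted_one_perfectly_orientable (fst B) (snd B) v))
     \<or>
     (\<exists>vr. cut_vertex V E vr \<and>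
        (\<forall>B v. is_block V E B \<and> cut_vertex V E v \<and>
           rooted_arc (block_tree V E) (Inr vr) (Inl B) (Inr v)
           \<longrightarrow> rooted_one_perfectly_orientable (fst B) (snd B) v)))"
proof -
  interpret separable_graph V E using assms by unfold_locales
  show ?thesis
    using one_perfectly_orientable_iff_rooted unfolding rooted_blocks_orientable_def .
qed

end
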